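(* Let $(\mathcal C,\otimes,\mathbb I)$ be a monoidal category with pushouts and $(H,\Delta,\varepsilon)$ a coalgebra in $\mathcal C$. Let $(X,X\bullet H,\pi_X,\rho_X)$ be a geometric partial $H$-comodule. Consider the free comodule $(X\otimes H,X\otimes\Delta)$ and the two parallel morphisms of $H$-comodules $$\rho_X\otimes H,\ \ (\pi_X\otimes H)\circ(X\otimes\Delta)\ :\ (X\otimes H,X\otimes\Delta)\longrightarrow ((X\bullet H)\otimes H,(X\bullet H)\otimes\Delta).$$ Then $X$ is globalizable if and only if (I) the equalizer $(Y_X,\kappa)$ of this pair exists in $\mathsf{Com}^H$, and (II) the commutative square formed by $(X\otimes\varepsilon)\circ\kappa:Y_X\to X$, $\kappa:Y_X\to X\otimes H$, $\rho_X:X\to X\bullet H$ and $\pi_X:X\otimes H\to X\bullet H$ is a pushout square in $\mathcal C$. Moreover, under these equivalent conditions, $Y_X$ (with $p=(X\otimes\varepsilon)\circ\kappa$) is the globalization of $X$, and $Y_X$ is co-generated by $X$ as a global $H$-comodule, i.e. $(p\otimes H)\circ\delta_{Y_X}:Y_X\to X\otimes H$ is a monomorphism in $\mathsf{Com}^H$, where $\delta_{Y_X}$ is the coaction of $Y_X$.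
   Context: $\mathcal C$ is treated as strict monoidal; the identity of an object $X$ is also written $X$ (so $X\otimes\varepsilon=\mathrm{id}_X\otimes\varepsilon$). $\mathsf{Com}^H$ is the category of right $H$-comodules $(Y,\delta)$, $\delta:Y\to Y\otimes H$. A partial comodule datum is $(X,X\bullet H,\pi_X,\rho_X)$ with morphisms $\rho_X:X\to X\bullet H$ and $\pi_X:X\otimes H\to X\bullet H$, $\pi_X$ an epimorphism. For such a datum let: $(X\bullet H)\bullet H$ be the pushout of $\pi_X$ and $\rho_X\otimes H:X\otimes H\to(X\bullet H)\otimes H$, with coprojections $\rho_X\bullet H:X\bullet H\to (X\bullet H)\bullet H$ and $\pi_{X\bullet H}:(X\bullet H)\otimes H\to(X\bullet H)\bullet H$; $X\bullet(H\otimes H)$ the pushout of $\pi_X$ and $X\otimes\Delta$, with coprojections $X\bullet\Delta:X\bullet H\to X\bullet(H\otimes H)$ and $\pi_{X,\Delta}:X\otimes H\otimes H\to X\bullet(H\otimes H)$; $X\bullet(H\bullet H)$ the pushout of $\pi_{X,\Delta}$ and $\pi_X\otimes H:X\otimes H\otimes H\to(X\bullet H)\otimes H$, with coprojections $\pi'_X:X\bullet(H\otimes H)\to X\bullet(H\bullet H)$ and $\pi'_{X,\Delta}:(X\bullet H)\otimes H\to X\bullet(H\bullet H)$. A geometric partial $H$-comodule is a datum such that (GP1) there is $X\bullet\varepsilon:X\bullet H\to X$ with $(X\bullet\varepsilon)\circ\rho_X=\mathrm{id}_X$ and $(X\bullet\varepsilon)\circ\pi_X=X\otimes\varepsilon$;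 (GP2) there is an isomorphism $\theta:X\bullet(H\bullet H)\to(X\bullet H)\bullet H$ with $\theta\circ\pi'_{X,\Delta}=\pi_{X\bullet H}$ and $(\rho_X\bullet H)\circ\rho_X=\theta\circ\pi'_X\circ(X\bullet\Delta)\circ\rho_X$. A morphism $X\to X'$ of geometric partial comodules is a pair $(f,f\bullet H)$ with $f:X\to X'$, $f\bullet H:X\bullet H\to X'\bullet H$, $\rho_{X'}\circ f=(f\bullet H)\circ\rho_X$ and $\pi_{X'}\circ(f\otimes H)=(f\bullet H)\circ\pi_X$. These form a category $\mathsf{PCom}^H$. A global comodule $(Y,\delta)$ gives the geometric partial comodule $\mathcal I(Y)=(Y,Y\otimes H,\mathrm{id},\delta)$; a morphism $\mathcal I(Y)\to X$ amounts to a morphism $g:Y\to X$ in $\mathcal C$ with $\pi_X\circ(g\otimes H)\circ\delta=\rho_X\circ g$. A globalization of a geometric partial comodule $X$ is a global comodule $(Y,\delta)$ with a morphism $p:Y\to X$ in $\mathcal C$ such that (GL1) $p$ is a morphism $\mathcal I(Y)\to X$; (GL2) $X\bullet H$ with $\rho_X,\pi_X$ is a pushout in $\mathcal C$ of $p:Y\to X$ and $(p\otimes H)\circ\delta:Y\to X\otimes H$; (GL3) for every global comodule $(Z,\delta')$ and every morphism $q:\mathcal I(Z)\to X$ of geometric partial comodules there is a unique comodule morphism $\eta:Z\to Y$ with $p\circ\eta=q$. $X$ is globalizable if a globalization exists. *)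

theory Defs
  imports Main
begin

text \<open>A (small) category whose objects are all elements of type 'o and whose
morphisms are all elements of type 'm, together with a strict monoidal structure.
mcomp C g f is the composite "g after f".\<close>

record ('o, 'm) smc =
  mdom    :: "'m \<Rightarrow> 'o"
  mcod    :: "'m \<Rightarrow> 'o"
  mid     :: "'o \<Rightarrow> 'm"
  mcomp   :: "'m \<Rightarrow> 'm \<Rightarrow> 'm"
  otens   :: "'o \<Rightarrow> 'o \<Rightarrow> 'o"
  mtens   :: "'m \<Rightarrow> 'm \<Rightarrow> 'm"
  unitobj :: "'o"

definition arr :: "('o,'m) smc \<Rightarrow> 'm \<Rightarrow> 'o \<Rightarrow> 'o \<Rightarrow> bool" where
  "arr C f A B \<longleftrightarrow> mdom C f = A \<and> mcod C f = B"

definition strict_monoidal_category :: "('o,'m) smc \<Rightarrow> bool" where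
  "strict_monoidal_category C \<longleftrightarrow>
     (\<forall>A. arr C (mid C A) A A) \<and>
     (\<forall>f g. mcod C f = mdom C g \<longrightarrow> arr C (mcomp C g f) (mdom C f) (mcod C g)) \<and>
     (\<forall>f. mcomp C f (mid C (mdom C f)) = f \<and> mcomp C (mid C (mcod C f)) f = f) \<and>
     (\<forall>f g h. mcod C f = mdom C g \<longrightarrow> mcod C g = mdom C h \<longrightarrow>
        mcomp C h (mcomp C g f) = mcomp C (mcomp C h g) f) \<and>
     (\<forall>f g. arr C (mtens C f g) (otens C (mdom C f) (mdom C g)) (otens C (mcod C f) (mcod C g))) \<and>
     (\<forall>A B. mtens C (mid C A) (mid C B) = mid C (otens C A B)) \<and>
     (\<forall>f f' g g'. mcod C f = mdom C f' \<longrightarrow> mcod C g = mdom C g' \<longrightarrow>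
        mtens C (mcomp C f' f) (mcomp C g' g) = mcomp C (mtens C f' g') (mtens C f g)) \<and>
     (\<forall>A B D. otens C (otens C A B) D = otens C A (otens C B D)) \<and>
     (\<forall>f g h. mtens C (mtens C f g) h = mtens C f (mtens C g h)) \<and>
     (\<forall>A. otens C (unitobj C) A = A \<and> otens C A (unitobj C) = A) \<and>
     (\<forall>f. mtens C (mid C (unitobj C)) f = f \<and> mtens C f (mid C (unitobj C)) = f)"

definition epi :: "('o,'m) smc \<Rightarrow> 'm \<Rightarrow> bool" where
  "epi C e \<longleftrightarrow> (\<forall>g h. mdom C g = mcod C e \<longrightarrow> mdom C h = mcod C e \<longrightarrow>
      mcomp C g e = mcomp C h e \<longrightarrow> g = h)"

definition iso :: "('o,'m) smc \<Rightarrow> 'm \<Rightarrow> 'o \<Rightarrow> 'o \<Rightarrow> bool" where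
  "iso C f A B \<longleftrightarrow> arr C f A B \<and>
     (\<exists>g. arr C g B A \<and> mcomp C g f = mid C A \<and> mcomp C f g = mid C B)"

definition is_pushout :: "('o,'m) smc \<Rightarrow> 'm \<Rightarrow> 'm \<Rightarrow> 'o \<Rightarrow> 'm \<Rightarrow> 'm \<Rightarrow> bool" where
  "is_pushout C f g P i j \<longleftrightarrow>
     mdom C f = mdom C g \<and> arr C i (mcod C f) P \<and> arr C j (mcod C g) P \<and>
     mcomp C i f = mcomp C j g \<and>
     (\<forall>Q i' j'. arr C i' (mcod C f) Q \<longrightarrow> arr C j' (mcod C g) Q \<longrightarrow>
        mcomp C i' f = mcomp C j' g \<longrightarrow>
        (\<exists>!u. arr C u P Q \<and> mcomp C u i = i' \<and> mcomp C u j = j'))"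

definition has_pushouts :: "('o,'m) smc \<Rightarrow> bool" where
  "has_pushouts C \<longleftrightarrow> (\<forall>f g. mdom C f = mdom C g \<longrightarrow> (\<exists>P i j. is_pushout C f g P i j))"

definition coalgebra :: "('o,'m) smc \<Rightarrow> 'o \<Rightarrow> 'm \<Rightarrow> 'm \<Rightarrow> bool" where
  "coalgebra C H \<Delta> \<epsilon> \<longleftrightarrow>
     arr C \<Delta> H (otens C H H) \<and> arr C \<epsilon> H (unitobj C) \<and>
     mcomp C (mtens C \<Delta> (mid C H)) \<Delta> = mcomp C (mtens C (mid C H) \<Delta>) \<Delta> \<and>
     mcomp C (mtens C \<epsilon> (mid C H)) \<Delta> = mid C H \<and>
     mcomp C (mtens C (mid C H) \<epsilon>) \<Delta> = mid C H"

definition comodule :: "('o,'m) smc \<Rightarrow> 'o \<Rightarrow> 'm \<Rightarrow> 'm \<Rightarrow> 'o \<Rightarrow> 'm \<Rightarrow> bool" where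
  "comodule C H \<Delta> \<epsilon> Y \<delta> \<longleftrightarrow>
     arr C \<delta> Y (otens C Y H) \<and>
     mcomp C (mtens C \<delta> (mid C H)) \<delta> = mcomp C (mtens C (mid C Y) \<Delta>) \<delta> \<and>
     mcomp C (mtens C (mid C Y) \<epsilon>) \<delta> = mid C Y"

definition comod_hom :: "('o,'m) smc \<Rightarrow> 'o \<Rightarrow> 'o \<Rightarrow> 'm \<Rightarrow> 'o \<Rightarrow> 'm \<Rightarrow> 'm \<Rightarrow> bool" where
  "comod_hom C H Y \<delta> Y' \<delta>' f \<longleftrightarrow>
     arr C f Y Y' \<and> mcomp C \<delta>' f = mcomp C (mtens C f (mid C H)) \<delta>"

definition comod_equalizer ::
  "('o,'m) smc \<Rightarrow> 'o \<Rightarrow> 'm \<Rightarrow> 'm \<Rightarrow> 'o \<Rightarrow> 'm \<Rightarrow> 'm \<Rightarrow> 'm \<Rightarrow> 'o \<Rightarrow> 'm \<Rightarrow> 'm \<Rightarrow> bool" where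
  "comod_equalizer C H \<Delta> \<epsilon> S \<sigma> f g E \<delta>E \<kappa> \<longleftrightarrow>
     comodule C H \<Delta> \<epsilon> E \<delta>E \<and> comod_hom C H E \<delta>E S \<sigma> \<kappa> \<and>
     mcomp C f \<kappa> = mcomp C g \<kappa> \<and>
     (\<forall>W \<delta>W q. comodule C H \<Delta> \<epsilon> W \<delta>W \<longrightarrow> comod_hom C H W \<delta>W S \<sigma> q \<longrightarrow>
        mcomp C f q = mcomp C g q \<longrightarrow>
        (\<exists>!u. comod_hom C H W \<delta>W E \<delta>E u \<and> mcomp C \<kappa> u = q))"

definition comod_mono ::
  "('o,'m) smc \<Rightarrow> 'o \<Rightarrow> 'm \<Rightarrow> 'm \<Rightarrow> 'o \<Rightarrow> 'm \<Rightarrow> 'o \<Rightarrow> 'm \<Rightarrow> 'm \<Rightarrow> bool" where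
  "comod_mono C H \<Delta> \<epsilon> Y \<delta> Z \<delta>' m \<longleftrightarrow>
     comod_hom C H Y \<delta> Z \<delta>' m \<and>
     (\<forall>W \<delta>W a b. comodule C H \<Delta> \<epsilon> W \<delta>W \<longrightarrow> comod_hom C H W \<delta>W Y \<delta> a \<longrightarrow>
        comod_hom C H W \<delta>W Y \<delta> b \<longrightarrow> mcomp C m a = mcomp C m b \<longrightarrow> a = b)"

definition partial_comodule_datum :: "('o,'m) smc \<Rightarrow> 'o \<Rightarrow> 'o \<Rightarrow> 'o \<Rightarrow> 'm \<Rightarrow> 'm \<Rightarrow> bool" where
  "partial_comodule_datum C H X XH \<pi> \<rho> \<longleftrightarrow>
     arr C \<rho> X XH \<and> arr C \<pi> (otens C X H) XH \<and> epi C \<pi>"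

text \<open>Geometric partial comodule: (GP1) and (GP2).  In (GP2) the three pushouts
(X\<bullet>H)\<bullet>H, X\<bullet>(H\<otimes>H), X\<bullet>(H\<bullet>H) are arbitrary choices of the pushouts.\<close>
definition geometric_partial_comodule ::
  "('o,'m) smc \<Rightarrow> 'o \<Rightarrow> 'm \<Rightarrow> 'm \<Rightarrow> 'o \<Rightarrow> 'o \<Rightarrow> 'm \<Rightarrow> 'm \<Rightarrow> bool" where
  "geometric_partial_comodule C H \<Delta> \<epsilon> X XH \<pi> \<rho> \<longleftrightarrow>
     partial_comodule_datum C H X XH \<pi> \<rho> \<and>
     (\<exists>e. arr C e XH X \<and> mcomp C e \<rho> = mid C X \<and> mcomp C e \<pi> = mtens C (mid C X) \<epsilon>) \<and>
     (\<forall>XHH \<rho>H \<pi>XH XHH2 X\<Delta> \<pi>X\<Delta> XHH3 \<pi>'X \<pi>'X\<Delta>.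
        is_pushout C \<pi> (mtens C \<rho> (mid C H)) XHH \<rho>H \<pi>XH \<longrightarrow>
        is_pushout C \<pi> (mtens C (mid C X) \<Delta>) XHH2 X\<Delta> \<pi>X\<Delta> \<longrightarrow>
        is_pushout C \<pi>X\<Delta> (mtens C \<pi> (mid C H)) XHH3 \<pi>'X \<pi>'X\<Delta> \<longrightarrow>
        (\<exists>\<theta>. iso C \<theta> XHH3 XHH \<and> mcomp C \<theta> \<pi>'X\<Delta> = \<pi>XH \<and>
             mcomp C \<rho>H \<rho> = mcomp C \<theta> (mcomp C \<pi>'X (mcomp C X\<Delta> \<rho>))))"

definition globalization ::
  "('o,'m) smc \<Rightarrow> 'o \<Rightarrow> 'm \<Rightarrow> 'm \<Rightarrow> 'o \<Rightarrow> 'o \<Rightarrow> 'm \<Rightarrow> 'm \<Rightarrow> 'o \<Rightarrow> 'm \<Rightarrow> 'm \<Rightarrow> bool" where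
  "globalization C H \<Delta> \<epsilon> X XH \<pi> \<rho> Y \<delta> p \<longleftrightarrow>
     comodule C H \<Delta> \<epsilon> Y \<delta> \<and> arr C p Y X \<and>
     mcomp C \<pi> (mcomp C (mtens C p (mid C H)) \<delta>) = mcomp C \<rho> p \<and>
     is_pushout C p (mcomp C (mtens C p (mid C H)) \<delta>) XH \<rho> \<pi> \<and>
     (\<forall>Z \<delta>' q. comodule C H \<Delta> \<epsilon> Z \<delta>' \<longrightarrow> arr C q Z X \<longrightarrow>
        mcomp C \<pi> (mcomp C (mtens C q (mid C H)) \<delta>') = mcomp C \<rho> q \<longrightarrow>
        (\<exists>!\<eta>. comod_hom C H Z \<delta>' Y \<delta> \<eta> \<and> mcomp C p \<eta> = q))"

definition globalizable ::
  "('o,'m) smc \<Rightarrow> 'o \<Rightarrow> 'm \<Rightarrow> 'm \<Rightarrow> 'o \<Rightarrow> 'o \<Rightarrow> 'm \<Rightarrow> 'm \<Rightarrow> bool" where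
  "globalizable C H \<Delta> \<epsilon> X XH \<pi> \<rho> \<longleftrightarrow>
     (\<exists>Y \<delta> p. globalization C H \<Delta> \<epsilon> X XH \<pi> \<rho> Y \<delta> p)"

end

theory Submission imports Defs begin

text \<open>Comodule maps \<open>W \<rightarrow> X \<otimes> H\<close> into the cofree comodule correspond bijectively to
plain maps \<open>W \<rightarrow> X\<close>, via \<open>q \<mapsto> (X \<otimes> \<epsilon>) \<circ> q\<close> with inverse \<open>g \<mapsto> (g \<otimes> H) \<circ> \<delta>\<^sub>W\<close>.
Under this correspondence \<open>q\<close> equalizes \<open>\<rho>\<^sub>X \<otimes> H\<close> and \<open>(\<pi>\<^sub>X \<otimes> H) \<circ> (X \<otimes> \<Delta>)\<close> exactly
when \<open>g\<close> is a morphism \<open>\<I>(W) \<rightarrow> X\<close>. So an equalizer of the pair in \<open>Com\<^sup>H\<close> is the same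
as a comodule with a universal morphism into \<open>X\<close>, i.e. (GL1) and (GL3), and condition (II)
is (GL2) read through the correspondence. Co-generation holds because equalizers are monic.\<close>

locale coalgebra_in_smc =
  fixes C :: "('o,'m) smc" and H :: 'o and \<Delta> \<epsilon> :: 'm
  assumes smc: "strict_monoidal_category C"
    and coalgebra: "coalgebra C H \<Delta> \<epsilon>"
begin

abbreviation compose (infixr "\<cdot>" 55) where "g \<cdot> f \<equiv> mcomp C g f"
abbreviation tens (infixr "\<odot>" 60) where "f \<odot> g \<equiv> mtens C f g"
abbreviation otimes (infixr "\<otimes>" 60) where "A \<otimes> B \<equiv> otens C A B"
abbreviation idm where "idm A \<equiv> mid C A"
abbreviation source where "source f \<equiv> mdom C f"
abbreviation target where "target f \<equiv> mcod C f"

lemma source_id [simp]: "source (idm A) = A" and target_id [simp]: "target (idm A) = A"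
  using smc unfolding strict_monoidal_category_def arr_def by auto

lemma source_comp [simp]: "target f = source g \<Longrightarrow> source (g \<cdot> f) = source f"
  and target_comp [simp]: "target f = source g \<Longrightarrow> target (g \<cdot> f) = target g"
  using smc unfolding strict_monoidal_category_def arr_def by auto

lemma source_tens [simp]: "source (f \<odot> g) = source f \<otimes> source g"
  and target_tens [simp]: "target (f \<odot> g) = target f \<otimes> target g"
  using smc unfolding strict_monoidal_category_def arr_def by auto

lemma comp_id_right: "source f = A \<Longrightarrow> f \<cdot> idm A = f"
  and comp_id_left: "target f = A \<Longrightarrow> idm A \<cdot> f = f"
  using smc unfolding strict_monoidal_category_def arr_def by auto

lemma comp_assoc: "target f = source g \<Longrightarrow> target g = source h \<Longrightarrow> h \<cdot> (g \<cdot> f) = (h \<cdot> g) \<cdot> f"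
  using smc unfolding strict_monoidal_category_def by auto

lemma tens_id: "idm A \<odot> idm B = idm (A \<otimes> B)"
  using smc unfolding strict_monoidal_category_def by auto

lemma interchange:
  "target f = source f' \<Longrightarrow> target g = source g' \<Longrightarrow> (f' \<cdot> f) \<odot> (g' \<cdot> g) = (f' \<odot> g') \<cdot> (f \<odot> g)"
  using smc unfolding strict_monoidal_category_def by auto

lemma otimes_assoc [simp]: "(A \<otimes> B) \<otimes> D = A \<otimes> (B \<otimes> D)"
  using smc unfolding strict_monoidal_category_def by auto

lemma otimes_unit [simp]: "unitobj C \<otimes> A = A" "A \<otimes> unitobj C = A"
  using smc unfolding strict_monoidal_category_def by auto

lemma tens_assoc: "(f \<odot> g) \<odot> h = f \<odot> (g \<odot> h)"
  using smc unfolding strict_monoidal_category_def by auto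

lemma tens_unit: "idm (unitobj C) \<odot> f = f" "f \<odot> idm (unitobj C) = f"
  using smc unfolding strict_monoidal_category_def by auto

lemma comp_tens_id: "target f = source g \<Longrightarrow> (g \<cdot> f) \<odot> idm A = (g \<odot> idm A) \<cdot> (f \<odot> idm A)"
  using interchange[of f g "idm A" "idm A"] by (simp add: comp_id_right)

lemma id_tens_comp: "target f = source g \<Longrightarrow> idm A \<odot> (g \<cdot> f) = (idm A \<odot> g) \<cdot> (idm A \<odot> f)"
  using interchange[of "idm A" "idm A" f g] by (simp add: comp_id_right)

lemma source_Delta [simp]: "source \<Delta> = H" and target_Delta [simp]: "target \<Delta> = H \<otimes> H"
  and source_epsilon [simp]: "source \<epsilon> = H" and target_epsilon [simp]: "target \<epsilon> = unitobj C"
  using coalgebra unfolding coalgebra_def arr_def by auto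

lemma coassoc: "(\<Delta> \<odot> idm H) \<cdot> \<Delta> = (idm H \<odot> \<Delta>) \<cdot> \<Delta>"
  and counit_left: "(\<epsilon> \<odot> idm H) \<cdot> \<Delta> = idm H"
  and counit_right: "(idm H \<odot> \<epsilon>) \<cdot> \<Delta> = idm H"
  using coalgebra unfolding coalgebra_def by auto

lemma counit_natural:
  assumes "source f = A" "target f = B"
  shows "(idm B \<odot> \<epsilon>) \<cdot> (f \<odot> idm H) = f \<cdot> (idm A \<odot> \<epsilon>)"
proof -
  have "(idm B \<odot> \<epsilon>) \<cdot> (f \<odot> idm H) = (idm B \<cdot> f) \<odot> (\<epsilon> \<cdot> idm H)"
    using interchange[of f "idm B" "idm H" \<epsilon>] assms by simp
  also have "\<dots> = (f \<cdot> idm A) \<odot> (idm (unitobj C) \<cdot> \<epsilon>)"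
    using assms by (simp add: comp_id_left comp_id_right)
  also have "\<dots> = f \<cdot> (idm A \<odot> \<epsilon>)"
    using interchange[of "idm A" f \<epsilon> "idm (unitobj C)"] assms by (simp add: tens_unit)
  finally show ?thesis .
qed

lemma comoduleD:
  assumes "comodule C H \<Delta> \<epsilon> Y \<delta>"
  shows "source \<delta> = Y" "target \<delta> = Y \<otimes> H" "(\<delta> \<odot> idm H) \<cdot> \<delta> = (idm Y \<odot> \<Delta>) \<cdot> \<delta>"
    "(idm Y \<odot> \<epsilon>) \<cdot> \<delta> = idm Y"
  using assms unfolding comodule_def arr_def by auto

lemma comod_homD:
  assumes "comod_hom C H Y \<delta> Y' \<delta>' f"
  shows "source f = Y" "target f = Y'" "\<delta>' \<cdot> f = (f \<odot> idm H) \<cdot> \<delta>"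
  using assms unfolding comod_hom_def arr_def by auto

lemma counit_cofree_transpose:
  assumes "comodule C H \<Delta> \<epsilon> Y \<delta>" "source f = Y" "target f = X"
  shows "(idm X \<odot> \<epsilon>) \<cdot> ((f \<odot> idm H) \<cdot> \<delta>) = f"
proof -
  note \<delta> = comoduleD[OF assms(1)]
  have "(idm X \<odot> \<epsilon>) \<cdot> ((f \<odot> idm H) \<cdot> \<delta>) = (f \<cdot> (idm Y \<odot> \<epsilon>)) \<cdot> \<delta>"
    using \<delta>(1,2) assms(2,3) by (simp add: comp_assoc counit_natural)
  also have "\<dots> = f"
    using \<delta> assms(2,3) by (simp flip: comp_assoc add: comp_id_right)
  finally show ?thesis .
qed

lemma cofree_comodule: "comodule C H \<Delta> \<epsilon> (X \<otimes> H) (idm X \<odot> \<Delta>)"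
proof -
  have "((idm X \<odot> \<Delta>) \<odot> idm H) \<cdot> (idm X \<odot> \<Delta>) = idm X \<odot> ((\<Delta> \<odot> idm H) \<cdot> \<Delta>)"
    by (simp add: id_tens_comp tens_assoc tens_id)
  also have "\<dots> = (idm (X \<otimes> H) \<odot> \<Delta>) \<cdot> (idm X \<odot> \<Delta>)"
    by (simp add: coassoc id_tens_comp tens_assoc flip: tens_id)
  finally have "((idm X \<odot> \<Delta>) \<odot> idm H) \<cdot> (idm X \<odot> \<Delta>) = (idm (X \<otimes> H) \<odot> \<Delta>) \<cdot> (idm X \<odot> \<Delta>)" .
  moreover have "(idm (X \<otimes> H) \<odot> \<epsilon>) \<cdot> (idm X \<odot> \<Delta>) = idm X \<odot> ((idm H \<odot> \<epsilon>) \<cdot> \<Delta>)"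
    by (simp add: id_tens_comp tens_assoc flip: tens_id)
  then have "(idm (X \<otimes> H) \<odot> \<epsilon>) \<cdot> (idm X \<odot> \<Delta>) = idm (X \<otimes> H)"
    by (simp add: counit_right tens_id)
  ultimately show ?thesis unfolding comodule_def arr_def by simp
qed

lemma comod_hom_comp:
  assumes a: "comod_hom C H W \<delta>W Y \<delta>Y a" and b: "comod_hom C H Y \<delta>Y Z \<delta>Z b"
    and "comodule C H \<Delta> \<epsilon> W \<delta>W" "comodule C H \<Delta> \<epsilon> Y \<delta>Y" "comodule C H \<Delta> \<epsilon> Z \<delta>Z"
  shows "comod_hom C H W \<delta>W Z \<delta>Z (b \<cdot> a)"
proof -
  note a' = comod_homD[OF a] and b' = comod_homD[OF b]
    and \<delta> = comoduleD(1,2)[OF assms(3)] comoduleD(1,2)[OF assms(4)] comoduleD(1,2)[OF assms(5)]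
  have "\<delta>Z \<cdot> (b \<cdot> a) = (b \<odot> idm H) \<cdot> (\<delta>Y \<cdot> a)"
    using a'(1,2) b' \<delta> by (simp add: comp_assoc)
  also have "\<dots> = ((b \<cdot> a) \<odot> idm H) \<cdot> \<delta>W"
    using a' b'(1,2) \<delta> by (simp add: comp_assoc comp_tens_id)
  finally show ?thesis unfolding comod_hom_def arr_def using a'(1,2) b'(1,2) by simp
qed

lemma comod_equalizer_mono:
  assumes eq: "comod_equalizer C H \<Delta> \<epsilon> S \<sigma> f g E \<delta>E \<kappa>"
    and S: "comodule C H \<Delta> \<epsilon> S \<sigma>" and "source f = S" "source g = S"
  shows "comod_mono C H \<Delta> \<epsilon> E \<delta>E S \<sigma> \<kappa>"
  unfolding comod_mono_def
proof (intro conjI allI impI)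
  have E: "comodule C H \<Delta> \<epsilon> E \<delta>E" and \<kappa>: "comod_hom C H E \<delta>E S \<sigma> \<kappa>"
    and f\<kappa>: "f \<cdot> \<kappa> = g \<cdot> \<kappa>"
    and univ: "\<And>W \<delta>W q. comodule C H \<Delta> \<epsilon> W \<delta>W \<Longrightarrow> comod_hom C H W \<delta>W S \<sigma> q \<Longrightarrow>
      f \<cdot> q = g \<cdot> q \<Longrightarrow> \<exists>!u. comod_hom C H W \<delta>W E \<delta>E u \<and> \<kappa> \<cdot> u = q"
    using eq unfolding comod_equalizer_def by auto
  show "comod_hom C H E \<delta>E S \<sigma> \<kappa>" by (fact \<kappa>)
  fix W \<delta>W a b
  assume W: "comodule C H \<Delta> \<epsilon> W \<delta>W" and a: "comod_hom C H W \<delta>W E \<delta>E a"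
    and b: "comod_hom C H W \<delta>W E \<delta>E b" and \<kappa>ab: "\<kappa> \<cdot> a = \<kappa> \<cdot> b"
  have "f \<cdot> (\<kappa> \<cdot> a) = g \<cdot> (\<kappa> \<cdot> a)"
    using comod_homD(1,2)[OF a] comod_homD(1,2)[OF \<kappa>] assms(3,4) f\<kappa> by (simp add: comp_assoc)
  with univ[OF W comod_hom_comp[OF a \<kappa> W E S]] show "a = b"
    using a b \<kappa>ab by metis
qed

lemma cofree_transpose_comod_hom:
  assumes Z: "comodule C H \<Delta> \<epsilon> Z \<delta>" and q: "source q = Z" "target q = X"
  shows "comod_hom C H Z \<delta> (X \<otimes> H) (idm X \<odot> \<Delta>) ((q \<odot> idm H) \<cdot> \<delta>)"
proof -
  note \<delta> = comoduleD[OF Z]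
  have "(idm X \<odot> \<Delta>) \<cdot> (q \<odot> idm H) = q \<odot> \<Delta>"
    using interchange[of q "idm X" "idm H" \<Delta>] q by (simp add: comp_id_left comp_id_right)
  also have "\<dots> = ((q \<odot> idm H) \<odot> idm H) \<cdot> (idm Z \<odot> \<Delta>)"
    using interchange[of "idm Z" q \<Delta> "idm (H \<otimes> H)"] q
    by (simp add: comp_id_left comp_id_right tens_assoc tens_id)
  finally have "(idm X \<odot> \<Delta>) \<cdot> ((q \<odot> idm H) \<cdot> \<delta>) = ((q \<odot> idm H) \<odot> idm H) \<cdot> ((idm Z \<odot> \<Delta>) \<cdot> \<delta>)"
    using \<delta>(1,2) q by (simp add: comp_assoc)
  also have "\<dots> = ((q \<odot> idm H) \<odot> idm H) \<cdot> ((\<delta> \<odot> idm H) \<cdot> \<delta>)"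
    by (simp add: \<delta>(3))
  also have "\<dots> = (((q \<odot> idm H) \<cdot> \<delta>) \<odot> idm H) \<cdot> \<delta>"
    using \<delta>(1,2) q by (simp add: comp_assoc comp_tens_id)
  finally show ?thesis unfolding comod_hom_def arr_def using \<delta>(1,2) q by simp
qed

lemma cofree_transpose_counit:
  assumes q: "comod_hom C H W \<delta>W (X \<otimes> H) (idm X \<odot> \<Delta>) q" and W: "comodule C H \<Delta> \<epsilon> W \<delta>W"
  shows "(((idm X \<odot> \<epsilon>) \<cdot> q) \<odot> idm H) \<cdot> \<delta>W = q"
proof -
  note q' = comod_homD[OF q] and \<delta> = comoduleD(1,2)[OF W]
  have "(idm X \<odot> \<epsilon> \<odot> idm H) \<cdot> (idm X \<odot> \<Delta>) = idm X \<odot> ((\<epsilon> \<odot> idm H) \<cdot> \<Delta>)"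
    by (simp add: id_tens_comp)
  then have counit: "(idm X \<odot> \<epsilon> \<odot> idm H) \<cdot> (idm X \<odot> \<Delta>) = idm (X \<otimes> H)"
    by (simp add: counit_left tens_id)
  have "(((idm X \<odot> \<epsilon>) \<cdot> q) \<odot> idm H) \<cdot> \<delta>W = ((idm X \<odot> \<epsilon>) \<odot> idm H) \<cdot> ((q \<odot> idm H) \<cdot> \<delta>W)"
    using q'(1,2) \<delta> by (simp add: comp_assoc comp_tens_id)
  also have "\<dots> = (idm X \<odot> \<epsilon> \<odot> idm H) \<cdot> ((idm X \<odot> \<Delta>) \<cdot> q)"
    by (simp add: q'(3) tens_assoc)
  also have "\<dots> = q" using q'(1,2) by (simp add: comp_assoc counit comp_id_left)
  finally show ?thesis .
qed

lemma cofree_transpose_comp: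
  assumes \<eta>: "comod_hom C H Z \<delta>Z Y \<delta>Y \<eta>" and "comodule C H \<Delta> \<epsilon> Z \<delta>Z"
    and "comodule C H \<Delta> \<epsilon> Y \<delta>Y" and "source p = Y"
  shows "((p \<cdot> \<eta>) \<odot> idm H) \<cdot> \<delta>Z = ((p \<odot> idm H) \<cdot> \<delta>Y) \<cdot> \<eta>"
proof -
  note \<eta>' = comod_homD[OF \<eta>]
    and \<delta> = comoduleD(1,2)[OF assms(2)] comoduleD(1,2)[OF assms(3)]
  have "((p \<cdot> \<eta>) \<odot> idm H) \<cdot> \<delta>Z = (p \<odot> idm H) \<cdot> ((\<eta> \<odot> idm H) \<cdot> \<delta>Z)"
    using \<eta>'(1,2) \<delta> assms(4) by (simp add: comp_assoc comp_tens_id)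
  also have "\<dots> = (p \<odot> idm H) \<cdot> (\<delta>Y \<cdot> \<eta>)"
    by (simp add: \<eta>'(3))
  also have "\<dots> = ((p \<odot> idm H) \<cdot> \<delta>Y) \<cdot> \<eta>"
    using \<eta>'(1,2) \<delta> assms(4) by (simp add: comp_assoc)
  finally show ?thesis .
qed

lemma cofree_transpose_comp_eq_iff:
  assumes \<eta>: "comod_hom C H Z \<delta>Z Y \<delta>Y \<eta>" and Z: "comodule C H \<Delta> \<epsilon> Z \<delta>Z"
    and Y: "comodule C H \<Delta> \<epsilon> Y \<delta>Y" and p: "source p = Y" "target p = X"
    and q: "source q = Z" "target q = X"
  shows "((p \<odot> idm H) \<cdot> \<delta>Y) \<cdot> \<eta> = (q \<odot> idm H) \<cdot> \<delta>Z \<longleftrightarrow> p \<cdot> \<eta> = q"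
proof
  assume "((p \<odot> idm H) \<cdot> \<delta>Y) \<cdot> \<eta> = (q \<odot> idm H) \<cdot> \<delta>Z"
  then have "(idm X \<odot> \<epsilon>) \<cdot> (((p \<cdot> \<eta>) \<odot> idm H) \<cdot> \<delta>Z) = (idm X \<odot> \<epsilon>) \<cdot> ((q \<odot> idm H) \<cdot> \<delta>Z)"
    by (simp add: cofree_transpose_comp[OF \<eta> Z Y p(1)])
  then show "p \<cdot> \<eta> = q"
    using comod_homD(1,2)[OF \<eta>] p q by (simp add: counit_cofree_transpose[OF Z])
qed (use cofree_transpose_comp[OF \<eta> Z Y p(1)] in simp)

end

locale partial_comodule_in_smc = coalgebra_in_smc C H \<Delta> \<epsilon>
    for C :: "('o,'m) smc" and H \<Delta> \<epsilon> +
  fixes X XH :: 'o and \<pi> \<rho> :: 'm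
  assumes rho_arr: "arr C \<rho> X XH" and pi_arr: "arr C \<pi> (X \<otimes> H) XH"
begin

lemma source_rho [simp]: "source \<rho> = X" and target_rho [simp]: "target \<rho> = XH"
  and source_pi [simp]: "source \<pi> = X \<otimes> H" and target_pi [simp]: "target \<pi> = XH"
  using rho_arr pi_arr unfolding arr_def by auto

abbreviation rho_H where "rho_H \<equiv> \<rho> \<odot> idm H"
abbreviation pi_Delta where "pi_Delta \<equiv> (\<pi> \<odot> idm H) \<cdot> (idm X \<odot> \<Delta>)"

text \<open>\<open>partial_morphism Z \<delta> q\<close> says that \<open>q\<close> is a morphism \<open>\<I>(Z) \<rightarrow> X\<close> of geometric
partial comodules.\<close>

definition partial_morphism :: "'o \<Rightarrow> 'm \<Rightarrow> 'm \<Rightarrow> bool" where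
  "partial_morphism Z \<delta> q \<longleftrightarrow> arr C q Z X \<and> \<pi> \<cdot> ((q \<odot> idm H) \<cdot> \<delta>) = \<rho> \<cdot> q"

definition universal_partial_morphism :: "'o \<Rightarrow> 'm \<Rightarrow> 'm \<Rightarrow> bool" where
  "universal_partial_morphism Y \<delta> p \<longleftrightarrow>
     comodule C H \<Delta> \<epsilon> Y \<delta> \<and> partial_morphism Y \<delta> p \<and>
     (\<forall>Z \<delta>Z q. comodule C H \<Delta> \<epsilon> Z \<delta>Z \<longrightarrow> partial_morphism Z \<delta>Z q \<longrightarrow>
        (\<exists>!\<eta>. comod_hom C H Z \<delta>Z Y \<delta> \<eta> \<and> p \<cdot> \<eta> = q))"

lemma globalization_iff:
  "globalization C H \<Delta> \<epsilon> X XH \<pi> \<rho> Y \<delta> p \<longleftrightarrow>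
     universal_partial_morphism Y \<delta> p \<and> is_pushout C p ((p \<odot> idm H) \<cdot> \<delta>) XH \<rho> \<pi>"
  unfolding globalization_def universal_partial_morphism_def partial_morphism_def by blast

lemma equalized_imp_counit:
  assumes "source k = W" "target k = X \<otimes> H" and eq: "rho_H \<cdot> k = pi_Delta \<cdot> k"
  shows "\<pi> \<cdot> k = \<rho> \<cdot> ((idm X \<odot> \<epsilon>) \<cdot> k)"
proof -
  have "(idm X \<odot> idm H \<odot> \<epsilon>) \<cdot> (idm X \<odot> \<Delta>) = idm X \<odot> ((idm H \<odot> \<epsilon>) \<cdot> \<Delta>)"
    by (simp add: id_tens_comp)
  then have counit: "(idm X \<odot> idm H \<odot> \<epsilon>) \<cdot> (idm X \<odot> \<Delta>) = idm (X \<otimes> H)"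
    by (simp add: counit_right tens_id)
  have "(idm XH \<odot> \<epsilon>) \<cdot> pi_Delta = (\<pi> \<cdot> (idm (X \<otimes> H) \<odot> \<epsilon>)) \<cdot> (idm X \<odot> \<Delta>)"
    by (simp add: comp_assoc counit_natural)
  also have "\<dots> = \<pi> \<cdot> ((idm X \<odot> idm H \<odot> \<epsilon>) \<cdot> (idm X \<odot> \<Delta>))"
    by (simp add: comp_assoc tens_assoc flip: tens_id)
  also have "\<dots> = \<pi>"
    by (simp add: counit comp_id_right)
  finally have "\<pi> \<cdot> k = (idm XH \<odot> \<epsilon>) \<cdot> (pi_Delta \<cdot> k)"
    using assms(1,2) by (simp add: comp_assoc)
  also have "\<dots> = (idm XH \<odot> \<epsilon>) \<cdot> (rho_H \<cdot> k)"
    by (simp add: eq)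
  also have "\<dots> = ((idm XH \<odot> \<epsilon>) \<cdot> rho_H) \<cdot> k"
    using assms(1,2) by (simp add: comp_assoc)
  also have "\<dots> = \<rho> \<cdot> ((idm X \<odot> \<epsilon>) \<cdot> k)"
    using assms(1,2) by (simp add: counit_natural comp_assoc)
  finally show ?thesis .
qed

lemma partial_morphism_equalizes:
  assumes Z: "comodule C H \<Delta> \<epsilon> Z \<delta>" and q: "partial_morphism Z \<delta> q"
  shows "rho_H \<cdot> ((q \<odot> idm H) \<cdot> \<delta>) = pi_Delta \<cdot> ((q \<odot> idm H) \<cdot> \<delta>)"
proof -
  define k where "k = (q \<odot> idm H) \<cdot> \<delta>"
  have q': "source q = Z" "target q = X" and gl: "\<pi> \<cdot> k = \<rho> \<cdot> q"
    using q unfolding partial_morphism_def arr_def k_def by auto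
  note \<delta> = comoduleD(1,2)[OF Z]
  have k: "comod_hom C H Z \<delta> (X \<otimes> H) (idm X \<odot> \<Delta>) k"
    unfolding k_def by (rule cofree_transpose_comod_hom[OF Z q'])
  note k' = comod_homD[OF k]
  have "rho_H \<cdot> k = ((\<rho> \<cdot> q) \<odot> idm H) \<cdot> \<delta>"
    unfolding k_def using q' \<delta> by (simp add: comp_assoc comp_tens_id)
  also have "\<dots> = (\<pi> \<odot> idm H) \<cdot> ((k \<odot> idm H) \<cdot> \<delta>)"
    using k'(1,2) \<delta> by (simp flip: gl add: comp_assoc comp_tens_id)
  also have "\<dots> = pi_Delta \<cdot> k"
    using k' by (simp flip: k'(3) add: comp_assoc)
  finally show ?thesis unfolding k_def .
qed

abbreviation cofree_equalizer where
  "cofree_equalizer Y \<delta> \<kappa> \<equiv>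
     comod_equalizer C H \<Delta> \<epsilon> (X \<otimes> H) (idm X \<odot> \<Delta>) rho_H pi_Delta Y \<delta> \<kappa>"

lemma universal_of_cofree_equalizer:
  assumes "cofree_equalizer Y \<delta> \<kappa>"
  shows "universal_partial_morphism Y \<delta> ((idm X \<odot> \<epsilon>) \<cdot> \<kappa>)"
    and "(((idm X \<odot> \<epsilon>) \<cdot> \<kappa>) \<odot> idm H) \<cdot> \<delta> = \<kappa>"
proof -
  have Y: "comodule C H \<Delta> \<epsilon> Y \<delta>" and \<kappa>: "comod_hom C H Y \<delta> (X \<otimes> H) (idm X \<odot> \<Delta>) \<kappa>"
    and eq: "rho_H \<cdot> \<kappa> = pi_Delta \<cdot> \<kappa>"
    and univ: "\<And>W \<delta>W q. comodule C H \<Delta> \<epsilon> W \<delta>W \<Longrightarrow>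
      comod_hom C H W \<delta>W (X \<otimes> H) (idm X \<odot> \<Delta>) q \<Longrightarrow> rho_H \<cdot> q = pi_Delta \<cdot> q \<Longrightarrow>
      \<exists>!u. comod_hom C H W \<delta>W Y \<delta> u \<and> \<kappa> \<cdot> u = q"
    using assms unfolding comod_equalizer_def by auto
  define p where "p = (idm X \<odot> \<epsilon>) \<cdot> \<kappa>"
  note \<kappa>' = comod_homD[OF \<kappa>]
  have p: "source p = Y" "target p = X" unfolding p_def using \<kappa>'(1,2) by simp_all
  show \<kappa>_transpose: "(((idm X \<odot> \<epsilon>) \<cdot> \<kappa>) \<odot> idm H) \<cdot> \<delta> = \<kappa>"
    by (rule cofree_transpose_counit[OF \<kappa> Y])
  have "partial_morphism Y \<delta> p"
    unfolding partial_morphism_def arr_def p_def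
    using equalized_imp_counit[OF \<kappa>'(1,2) eq] \<kappa>_transpose p by (simp add: p_def)
  moreover have "\<exists>!\<eta>. comod_hom C H Z \<delta>Z Y \<delta> \<eta> \<and> p \<cdot> \<eta> = q"
    if Z: "comodule C H \<Delta> \<epsilon> Z \<delta>Z" and q: "partial_morphism Z \<delta>Z q" for Z \<delta>Z q
  proof -
    have q': "source q = Z" "target q = X" using q unfolding partial_morphism_def arr_def by auto
    have "\<exists>!u. comod_hom C H Z \<delta>Z Y \<delta> u \<and> ((p \<odot> idm H) \<cdot> \<delta>) \<cdot> u = (q \<odot> idm H) \<cdot> \<delta>Z"
      using univ[OF Z cofree_transpose_comod_hom[OF Z q'] partial_morphism_equalizes[OF Z q]]
        \<kappa>_transpose by (simp add: p_def)
    then show ?thesis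
      using cofree_transpose_comp_eq_iff[OF _ Z Y p q'] by metis
  qed
  ultimately show "universal_partial_morphism Y \<delta> ((idm X \<odot> \<epsilon>) \<cdot> \<kappa>)"
    unfolding universal_partial_morphism_def p_def using Y by blast
qed

lemma cofree_equalizer_of_universal:
  assumes "universal_partial_morphism Y \<delta> p"
  shows "cofree_equalizer Y \<delta> ((p \<odot> idm H) \<cdot> \<delta>)"
proof -
  have Y: "comodule C H \<Delta> \<epsilon> Y \<delta>" and p: "partial_morphism Y \<delta> p"
    and univ: "\<And>Z \<delta>Z q. comodule C H \<Delta> \<epsilon> Z \<delta>Z \<Longrightarrow> partial_morphism Z \<delta>Z q \<Longrightarrow>
      \<exists>!\<eta>. comod_hom C H Z \<delta>Z Y \<delta> \<eta> \<and> p \<cdot> \<eta> = q"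
    using assms unfolding universal_partial_morphism_def by auto
  have p': "source p = Y" "target p = X" using p unfolding partial_morphism_def arr_def by auto
  have "\<exists>!u. comod_hom C H W \<delta>W Y \<delta> u \<and> ((p \<odot> idm H) \<cdot> \<delta>) \<cdot> u = q"
    if W: "comodule C H \<Delta> \<epsilon> W \<delta>W" and q: "comod_hom C H W \<delta>W (X \<otimes> H) (idm X \<odot> \<Delta>) q"
      and eq: "rho_H \<cdot> q = pi_Delta \<cdot> q" for W \<delta>W q
  proof -
    define q0 where "q0 = (idm X \<odot> \<epsilon>) \<cdot> q"
    note q' = comod_homD[OF q]
    have q0: "source q0 = W" "target q0 = X" unfolding q0_def using q'(1,2) by simp_all
    have q_transpose: "(q0 \<odot> idm H) \<cdot> \<delta>W = q"
      unfolding q0_def by (rule cofree_transpose_counit[OF q W])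
    have "partial_morphism W \<delta>W q0"
      unfolding partial_morphism_def arr_def q_transpose
      using q0 equalized_imp_counit[OF q'(1,2) eq] by (simp add: q0_def)
    then have "\<exists>!u. comod_hom C H W \<delta>W Y \<delta> u \<and> p \<cdot> u = q0" by (rule univ[OF W])
    then show ?thesis
      using cofree_transpose_comp_eq_iff[OF _ W Y p' q0] q_transpose by metis
  qed
  then show ?thesis
    unfolding comod_equalizer_def
    using Y cofree_transpose_comod_hom[OF Y p'] partial_morphism_equalizes[OF Y p] by blast
qed

end

theorem theorem3p5:
  fixes C :: "('o, 'm) smc"
    and H X XH :: 'o
    and \<Delta> \<epsilon> \<pi> \<rho> :: 'm
  assumes "strict_monoidal_category C"
    and "has_pushouts C"
    and "coalgebra C H \<Delta> \<epsilon>"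
    and "geometric_partial_comodule C H \<Delta> \<epsilon> X XH \<pi> \<rho>"
  shows "(globalizable C H \<Delta> \<epsilon> X XH \<pi> \<rho> \<longleftrightarrow>
           (\<exists>Y \<delta> \<kappa>.
              comod_equalizer C H \<Delta> \<epsilon> (otens C X H) (mtens C (mid C X) \<Delta>)
                 (mtens C \<rho> (mid C H))
                 (mcomp C (mtens C \<pi> (mid C H)) (mtens C (mid C X) \<Delta>)) Y \<delta> \<kappa> \<and>
              is_pushout C (mcomp C (mtens C (mid C X) \<epsilon>) \<kappa>) \<kappa> XH \<rho> \<pi>))
       \<and> (\<forall>Y \<delta> \<kappa>.
              comod_equalizer C H \<Delta> \<epsilon> (otens C X H) (mtens C (mid C X) \<Delta>)
                 (mtens C \<rho> (mid C H))
                 (mcomp C (mtens C \<pi> (mid C H)) (mtens C (mid C X) \<Delta>)) Y \<delta> \<kappa> \<longrightarrow>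
              is_pushout C (mcomp C (mtens C (mid C X) \<epsilon>) \<kappa>) \<kappa> XH \<rho> \<pi> \<longrightarrow>
              globalization C H \<Delta> \<epsilon> X XH \<pi> \<rho> Y \<delta> (mcomp C (mtens C (mid C X) \<epsilon>) \<kappa>) \<and>
              comod_mono C H \<Delta> \<epsilon> Y \<delta> (otens C X H) (mtens C (mid C X) \<Delta>)
                 (mcomp C (mtens C (mcomp C (mtens C (mid C X) \<epsilon>) \<kappa>) (mid C H)) \<delta>))"
proof -
  interpret partial_comodule_in_smc C H \<Delta> \<epsilon> X XH \<pi> \<rho>
    using assms(1,3,4) by unfold_locales
      (auto simp: geometric_partial_comodule_def partial_comodule_datum_def)
  have "globalization C H \<Delta> \<epsilon> X XH \<pi> \<rho> Y \<delta> ((idm X \<odot> \<epsilon>) \<cdot> \<kappa>)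
      \<and> comod_mono C H \<Delta> \<epsilon> Y \<delta> (X \<otimes> H) (idm X \<odot> \<Delta>) ((((idm X \<odot> \<epsilon>) \<cdot> \<kappa>) \<odot> idm H) \<cdot> \<delta>)"
    if eq: "cofree_equalizer Y \<delta> \<kappa>" and po: "is_pushout C ((idm X \<odot> \<epsilon>) \<cdot> \<kappa>) \<kappa> XH \<rho> \<pi>"
    for Y \<delta> \<kappa>
    using universal_of_cofree_equalizer[OF eq] po globalization_iff
      comod_equalizer_mono[OF eq cofree_comodule] by simp
  moreover have "\<exists>Y \<delta> \<kappa>. cofree_equalizer Y \<delta> \<kappa> \<and> is_pushout C ((idm X \<odot> \<epsilon>) \<cdot> \<kappa>) \<kappa> XH \<rho> \<pi>"
    if "globalization C H \<Delta> \<epsilon> X XH \<pi> \<rho> Y \<delta> p" for Y \<delta> p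
  proof -
    from that have univ: "universal_partial_morphism Y \<delta> p"
      and po: "is_pushout C p ((p \<odot> idm H) \<cdot> \<delta>) XH \<rho> \<pi>"
      by (simp_all add: globalization_iff)
    have "(idm X \<odot> \<epsilon>) \<cdot> ((p \<odot> idm H) \<cdot> \<delta>) = p"
      using univ counit_cofree_transpose
      unfolding universal_partial_morphism_def partial_morphism_def arr_def by blast
    then show ?thesis using cofree_equalizer_of_universal[OF univ] po by metis
  qed
  ultimately show ?thesis unfolding globalizable_def by blast
qed

end
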